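(* Let $f:\{0,1\}^n\to\{0,1\}$ be $\epsilon$-far from being $t$-symmetric. Then every $J\subseteq[n]$ with $|J|\ge t$ satisfies $\mathrm{SymInf}_f(J)\ge\epsilon$.
   Context: $\mathcal{S}_J$ is the set of permutations of $[n]$ fixing every element outside $J$; $\pi x$ is the vector whose $\pi(i)$-th coordinate is $x_i$. $f$ is $J$-symmetric if $f(\pi x)=f(x)$ for all $x$, $\pi\in\mathcal{S}_J$; $t$-symmetric if $J$-symmetric for some $|J|\ge t$. $f$ is $\epsilon$-far from being $t$-symmetric if $\Pr_x[f(x)\ne g(x)]\ge\epsilon$ for all $t$-symmetric $g$. $\mathrm{SymInf}_f(J)=\Pr_{x,\pi}[f(x)\ne f(\pi x)]$, $x$ uniform in $\{0,1\}^n$, $\pi$ uniform in $\mathcal{S}_J$. *)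

theory Defs
  imports Complex_Main "HOL-Combinatorics.Permutations"
begin

text \<open>The cube {0,1}^n, coordinates indexed by [n] = {0..<n}; points are
  boolean functions on nat that vanish outside {0..<n}.\<close>
definition cube :: "nat \<Rightarrow> (nat \<Rightarrow> bool) set" where
  "cube n = {x. \<forall>i\<ge>n. \<not> x i}"

text \<open>pi x: the pi(i)-th coordinate of pi x is x_i, i.e. (pi x) j = x (inv pi j).\<close>
definition perm_act :: "(nat \<Rightarrow> nat) \<Rightarrow> (nat \<Rightarrow> bool) \<Rightarrow> (nat \<Rightarrow> bool)" where
  "perm_act \<pi> x = (\<lambda>j. x (inv \<pi> j))"

definition J_symmetric :: "nat \<Rightarrow> nat set \<Rightarrow> ((nat \<Rightarrow> bool) \<Rightarrow> bool) \<Rightarrow> bool" where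
  "J_symmetric n J g \<longleftrightarrow>
     (\<forall>x\<in>cube n. \<forall>\<pi>. \<pi> permutes J \<longrightarrow> g (perm_act \<pi> x) = g x)"

definition t_symmetric :: "nat \<Rightarrow> nat \<Rightarrow> ((nat \<Rightarrow> bool) \<Rightarrow> bool) \<Rightarrow> bool" where
  "t_symmetric n t g \<longleftrightarrow> (\<exists>J. J \<subseteq> {..<n} \<and> card J \<ge> t \<and> J_symmetric n J g)"

definition disagree :: "nat \<Rightarrow> ((nat \<Rightarrow> bool) \<Rightarrow> bool) \<Rightarrow> ((nat \<Rightarrow> bool) \<Rightarrow> bool) \<Rightarrow> real" where
  "disagree n f g = real (card {x\<in>cube n. f x \<noteq> g x}) / real (card (cube n))"

definition far_from_t_symmetric ::
  "nat \<Rightarrow> real \<Rightarrow> nat \<Rightarrow> ((nat \<Rightarrow> bool) \<Rightarrow> bool) \<Rightarrow> bool" where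
  "far_from_t_symmetric n \<epsilon> t f \<longleftrightarrow> (\<forall>g. t_symmetric n t g \<longrightarrow> disagree n f g \<ge> \<epsilon>)"

definition SymInf :: "nat \<Rightarrow> ((nat \<Rightarrow> bool) \<Rightarrow> bool) \<Rightarrow> nat set \<Rightarrow> real" where
  "SymInf n f J =
     real (card {(x, \<pi>). x \<in> cube n \<and> \<pi> permutes J \<and> f x \<noteq> f (perm_act \<pi> x)})
     / (real (card (cube n)) * real (card {\<pi>. \<pi> permutes J}))"

end

theory Submission
  imports Defs
begin

text \<open>Let \<open>g\<close> be the majority vote of \<open>f\<close> over each \<open>\<S>\<^sub>J\<close>-orbit; \<open>g\<close> is \<open>J\<close>-symmetric, so
  \<open>\<epsilon> \<le> Pr[f \<noteq> g]\<close>. Averaging over the orbit of \<open>x\<close>, with \<open>p\<close> the fraction of the orbit on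
  which \<open>f\<close> is true, \<open>Pr[f \<noteq> g]\<close> is the average of \<open>min p (1 - p)\<close> while \<open>SymInf\<^sub>f(J)\<close> is
  the average of \<open>2 p (1 - p)\<close>, and \<open>min p (1 - p) \<le> 2 p (1 - p)\<close>.\<close>

lemma perm_act_comp:
  assumes "bij \<pi>" "bij \<sigma>"
  shows "perm_act \<pi> (perm_act \<sigma> y) = perm_act (\<pi> \<circ> \<sigma>) y"
  using assms by (simp add: perm_act_def o_inv_distrib bij_is_inj bij_is_surj)

lemma perm_act_id [simp]: "perm_act id y = y"
  by (simp add: perm_act_def inv_id)

lemma finite_cube: "finite (cube n)"
proof (rule finite_subset)
  show "cube n \<subseteq> (\<lambda>S i. i \<in> S) ` Pow {..<n}"
  proof
    fix x assume "x \<in> cube n"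
    then have "x = (\<lambda>i. i \<in> {i. x i})" "{i. x i} \<in> Pow {..<n}"
      by (auto simp: cube_def) (meson not_le)
    then show "x \<in> (\<lambda>S i. i \<in> S) ` Pow {..<n}" by blast
  qed
qed simp

lemma card_cube_pos: "card (cube n) > 0"
proof -
  have "(\<lambda>_. False) \<in> cube n" by (simp add: cube_def)
  then show ?thesis using finite_cube[of n] by (auto simp: card_gt_0_iff)
qed

lemma card_permutes_pos: "finite J \<Longrightarrow> card {\<pi>. \<pi> permutes J} > 0"
  by (simp add: card_permutations)

lemma card_Collect_conj_eq_sum_of_bool:
  "finite {x. P x} \<Longrightarrow> of_nat (card {x. P x \<and> Q x}) = (\<Sum>x|P x. of_bool (Q x))"
  by (simp add: Int_def)

lemma disagree_eq_sum:
  "disagree n f g = (\<Sum>x\<in>cube n. of_bool (f x \<noteq> g x)) / real (card (cube n))"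
proof -
  have "real (card {x. x \<in> cube n \<and> f x \<noteq> g x}) = (\<Sum>x|x \<in> cube n. of_bool (f x \<noteq> g x))"
    by (rule card_Collect_conj_eq_sum_of_bool) (simp add: finite_cube)
  then show ?thesis by (simp add: disagree_def)
qed

lemma SymInf_eq_sum:
  assumes "finite J"
  shows "SymInf n f J
    = (\<Sum>x\<in>cube n. \<Sum>\<pi>|\<pi> permutes J. of_bool (f x \<noteq> f (perm_act \<pi> x)))
      / (real (card (cube n)) * real (card {\<pi>. \<pi> permutes J}))"
proof -
  have "{(x, \<pi>). x \<in> cube n \<and> \<pi> permutes J \<and> f x \<noteq> f (perm_act \<pi> x)}
      = Sigma (cube n) (\<lambda>x. {\<pi>. \<pi> permutes J \<and> f x \<noteq> f (perm_act \<pi> x)})"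
    by auto
  then have "real (card {(x, \<pi>). x \<in> cube n \<and> \<pi> permutes J \<and> f x \<noteq> f (perm_act \<pi> x)})
      = (\<Sum>x\<in>cube n. \<Sum>\<pi>|\<pi> permutes J. of_bool (f x \<noteq> f (perm_act \<pi> x)))"
    using finite_cube finite_permutations[OF assms]
    by (simp add: card_SigmaI card_Collect_conj_eq_sum_of_bool del: sum_of_bool_eq)
  then show ?thesis unfolding SymInf_def by simp
qed

lemma perm_act_in_cube:
  assumes "\<sigma> permutes J" "J \<subseteq> {..<n}" "y \<in> cube n"
  shows "perm_act \<sigma> y \<in> cube n"
proof -
  have "inv \<sigma> i = i" if "i \<ge> n" for i
    using permutes_inv[OF assms(1)] assms(2) that
    by (meson lessThan_iff not_le permutes_not_in subset_iff)
  then show ?thesis using assms(3) by (auto simp: cube_def perm_act_def)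
qed

lemma bij_betw_perm_act_cube:
  assumes "\<sigma> permutes J" "J \<subseteq> {..<n}"
  shows "bij_betw (perm_act \<sigma>) (cube n) (cube n)"
proof (rule bij_betw_byWitness[where f'="perm_act (inv \<sigma>)"])
  have b: "bij \<sigma>" "bij (inv \<sigma>)"
    using assms(1) permutes_bij permutes_inv by blast+
  show "\<forall>a\<in>cube n. perm_act (inv \<sigma>) (perm_act \<sigma> a) = a"
    using b by (simp add: perm_act_comp bij_is_inj)
  show "\<forall>a\<in>cube n. perm_act \<sigma> (perm_act (inv \<sigma>) a) = a"
    using b by (simp add: perm_act_comp bij_is_surj surj_iff[THEN iffD1])
  show "perm_act \<sigma> ` cube n \<subseteq> cube n" "perm_act (inv \<sigma>) ` cube n \<subseteq> cube n"
    using perm_act_in_cube permutes_inv assms by blast+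
qed

lemma sum_cube_orbit_average:
  fixes h :: "(nat \<Rightarrow> bool) \<Rightarrow> 'a::comm_semiring_1"
  assumes "J \<subseteq> {..<n}"
  shows "of_nat (card {\<pi>. \<pi> permutes J}) * (\<Sum>x\<in>cube n. h x)
       = (\<Sum>x\<in>cube n. \<Sum>\<sigma>|\<sigma> permutes J. h (perm_act \<sigma> x))"
proof -
  have "of_nat (card {\<pi>. \<pi> permutes J}) * (\<Sum>x\<in>cube n. h x)
      = (\<Sum>\<sigma>|\<sigma> permutes J. \<Sum>x\<in>cube n. h x)"
    by simp
  also have "\<dots> = (\<Sum>\<sigma>|\<sigma> permutes J. \<Sum>x\<in>cube n. h (perm_act \<sigma> x))"
  proof (rule sum.cong[OF refl])
    fix \<sigma> assume "\<sigma> \<in> {\<pi>. \<pi> permutes J}"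
    then have "bij_betw (perm_act \<sigma>) (cube n) (cube n)"
      using bij_betw_perm_act_cube assms by blast
    then show "(\<Sum>x\<in>cube n. h x) = (\<Sum>x\<in>cube n. h (perm_act \<sigma> x))"
      by (rule sum.reindex_bij_betw[symmetric])
  qed
  also have "\<dots> = (\<Sum>x\<in>cube n. \<Sum>\<sigma>|\<sigma> permutes J. h (perm_act \<sigma> x))"
    by (rule sum.swap)
  finally show ?thesis .
qed

lemma sum_permutes_perm_act_right:
  fixes h :: "(nat \<Rightarrow> bool) \<Rightarrow> 'a::comm_monoid_add"
  assumes "\<sigma> permutes J"
  shows "(\<Sum>\<pi>|\<pi> permutes J. h (perm_act \<pi> (perm_act \<sigma> y))) = (\<Sum>\<pi>|\<pi> permutes J. h (perm_act \<pi> y))"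
proof -
  have "(\<Sum>\<pi>|\<pi> permutes J. h (perm_act \<pi> y)) = (\<Sum>\<pi>|\<pi> permutes J. h (perm_act (\<pi> \<circ> \<sigma>) y))"
    by (rule sum_permutations_compose_right[OF assms])
  also have "\<dots> = (\<Sum>\<pi>|\<pi> permutes J. h (perm_act \<pi> (perm_act \<sigma> y)))"
    using assms by (intro sum.cong) (simp_all add: perm_act_comp permutes_bij)
  finally show ?thesis ..
qed

lemma sum_sum_of_bool_neq:
  fixes h :: "'a \<Rightarrow> bool"
  assumes "finite P"
  defines "a \<equiv> real (card {\<sigma>\<in>P. h \<sigma>})"
  shows "(\<Sum>\<sigma>\<in>P. \<Sum>\<tau>\<in>P. of_bool (h \<sigma> \<noteq> h \<tau>) :: real) = 2 * a * (real (card P) - a)"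
proof -
  have a: "(\<Sum>\<sigma>\<in>P. of_bool (h \<sigma>)) = a"
    using assms by (simp add: Int_def conj_commute)
  have neq: "of_bool (b \<noteq> c) = of_bool b * (1 - of_bool c) + (1 - of_bool b) * (of_bool c :: real)"
    for b c by auto
  show ?thesis
    unfolding neq sum.distrib sum_distrib_left[symmetric] sum_distrib_right[symmetric]
      sum_subtractf a by (simp add: algebra_simps)
qed

lemma majority_disagreement_le:
  fixes h :: "'a \<Rightarrow> bool"
  assumes "finite P"
  defines "b \<equiv> card P \<le> 2 * card {\<sigma>\<in>P. h \<sigma>}"
  shows "real (card P) * (\<Sum>\<sigma>\<in>P. of_bool (h \<sigma> \<noteq> b))
       \<le> (\<Sum>\<sigma>\<in>P. \<Sum>\<tau>\<in>P. of_bool (h \<sigma> \<noteq> h \<tau>))"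
proof -
  define N where "N = real (card P)"
  define a where "a = real (card {\<sigma>\<in>P. h \<sigma>})"
  have "card {\<sigma>\<in>P. h \<sigma>} \<le> card P" using assms(1) by (intro card_mono) auto
  then have "0 \<le> a" "a \<le> N" by (auto simp: a_def N_def)
  have "{\<sigma>\<in>P. \<not> h \<sigma>} = P - {\<sigma>\<in>P. h \<sigma>}" by auto
  then have "real (card {\<sigma>\<in>P. \<not> h \<sigma>}) = N - a"
    using assms(1) \<open>card {\<sigma>\<in>P. h \<sigma>} \<le> card P\<close>
    by (simp add: card_Diff_subset of_nat_diff N_def a_def)
  then have "(\<Sum>\<sigma>\<in>P. of_bool (h \<sigma> \<noteq> b)) = (if b then N - a else a)"
    using assms(1) by (simp add: Int_def conj_commute a_def)
  also have "\<dots> = (if N \<le> 2 * a then N - a else a)"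
    by (simp add: b_def N_def a_def)
  finally have "N * (\<Sum>\<sigma>\<in>P. of_bool (h \<sigma> \<noteq> b)) = N * (if N \<le> 2 * a then N - a else a)"
    by simp
  also have "\<dots> \<le> 2 * a * (N - a)"
  proof (cases "N \<le> 2 * a")
    case True
    then show ?thesis using \<open>a \<le> N\<close> mult_right_mono[of N "2 * a" "N - a"]
      by (simp add: algebra_simps)
  next
    case False
    then show ?thesis using \<open>0 \<le> a\<close> mult_right_mono[of N "2 * (N - a)" a]
      by (simp add: algebra_simps)
  qed
  also have "\<dots> = (\<Sum>\<sigma>\<in>P. \<Sum>\<tau>\<in>P. of_bool (h \<sigma> \<noteq> h \<tau>))"
    unfolding sum_sum_of_bool_neq[OF assms(1)] N_def a_def ..
  finally show ?thesis unfolding N_def .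
qed

definition sym_majority :: "nat set \<Rightarrow> ((nat \<Rightarrow> bool) \<Rightarrow> bool) \<Rightarrow> (nat \<Rightarrow> bool) \<Rightarrow> bool" where
  "sym_majority J f y \<longleftrightarrow>
     card {\<sigma>. \<sigma> permutes J} \<le> 2 * card {\<sigma>. \<sigma> permutes J \<and> f (perm_act \<sigma> y)}"

lemma sym_majority_perm_act:
  assumes "\<pi> permutes J" "finite J"
  shows "sym_majority J f (perm_act \<pi> y) = sym_majority J f y"
proof -
  have card_eq_sum: "card {\<sigma>. \<sigma> permutes J \<and> f (perm_act \<sigma> z)}
      = (\<Sum>\<sigma>|\<sigma> permutes J. of_bool (f (perm_act \<sigma> z)))" for z
    using card_Collect_conj_eq_sum_of_bool[OF finite_permutations[OF assms(2)]] by (metis of_nat_id)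
  have "card {\<sigma>. \<sigma> permutes J \<and> f (perm_act \<sigma> (perm_act \<pi> y))}
      = card {\<sigma>. \<sigma> permutes J \<and> f (perm_act \<sigma> y)}"
    unfolding card_eq_sum using sum_permutes_perm_act_right[OF assms(1), of "\<lambda>z. of_bool (f z)" y]
    by simp
  then show ?thesis by (simp add: sym_majority_def)
qed

lemma J_symmetric_sym_majority:
  assumes "J \<subseteq> {..<n}"
  shows "J_symmetric n J (sym_majority J f)"
  using sym_majority_perm_act finite_subset[OF assms] by (auto simp: J_symmetric_def)

lemma sum_SymInf_orbit_form:
  assumes "J \<subseteq> {..<n}"
  shows "real (card {\<pi>. \<pi> permutes J})
        * (\<Sum>x\<in>cube n. \<Sum>\<pi>|\<pi> permutes J. of_bool (f x \<noteq> f (perm_act \<pi> x)))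
    = (\<Sum>y\<in>cube n. \<Sum>\<sigma>|\<sigma> permutes J. \<Sum>\<tau>|\<tau> permutes J.
         of_bool (f (perm_act \<sigma> y) \<noteq> f (perm_act \<tau> y)))"
  unfolding sum_cube_orbit_average[OF assms]
proof (rule sum.cong[OF refl], rule sum.cong[OF refl])
  fix y \<sigma> assume "\<sigma> \<in> {\<pi>. \<pi> permutes J}"
  then show "(\<Sum>\<pi>|\<pi> permutes J. of_bool (f (perm_act \<sigma> y) \<noteq> f (perm_act \<pi> (perm_act \<sigma> y))))
      = (\<Sum>\<tau>|\<tau> permutes J. of_bool (f (perm_act \<sigma> y) \<noteq> f (perm_act \<tau> y)))"
    by (intro sum_permutes_perm_act_right[of \<sigma> J "\<lambda>z. of_bool (f (perm_act \<sigma> y) \<noteq> f z)"]) simp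
qed

lemma sum_disagree_orbit_form:
  assumes "J \<subseteq> {..<n}" and g_invariant: "\<And>\<sigma> y. \<sigma> permutes J \<Longrightarrow> g (perm_act \<sigma> y) = g y"
  shows "real (card {\<pi>. \<pi> permutes J}) * (\<Sum>x\<in>cube n. of_bool (f x \<noteq> g x))
    = (\<Sum>y\<in>cube n. \<Sum>\<sigma>|\<sigma> permutes J. of_bool (f (perm_act \<sigma> y) \<noteq> g y))"
  unfolding sum_cube_orbit_average[OF assms(1)] using g_invariant by (intro sum.cong refl) simp

lemma disagree_sym_majority_le_SymInf:
  assumes J: "J \<subseteq> {..<n}"
  shows "disagree n f (sym_majority J f) \<le> SymInf n f J"
proof -
  define P where "P = {\<pi>. \<pi> permutes J}"
  define N where "N = real (card P)"
  define g where "g = sym_majority J f"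
  define S where "S = (\<Sum>x\<in>cube n. \<Sum>\<pi>\<in>P. of_bool (f x \<noteq> f (perm_act \<pi> x)) :: real)"
  define D where "D = (\<Sum>x\<in>cube n. of_bool (f x \<noteq> g x) :: real)"
  have finJ: "finite J" using J finite_subset by blast
  have finP: "finite P" using finite_permutations[OF finJ] by (simp add: P_def)
  have N: "N > 0" using card_permutes_pos[OF finJ] by (simp add: N_def P_def)
  have "N * (N * D) = (\<Sum>y\<in>cube n. N * (\<Sum>\<sigma>\<in>P. of_bool (f (perm_act \<sigma> y) \<noteq> g y)))"
    using sum_disagree_orbit_form[OF J, of g f] sym_majority_perm_act[OF _ finJ]
    by (simp add: N_def P_def D_def g_def sum_distrib_left)
  also have "\<dots> \<le> (\<Sum>y\<in>cube n. \<Sum>\<sigma>\<in>P. \<Sum>\<tau>\<in>P. of_bool (f (perm_act \<sigma> y) \<noteq> f (perm_act \<tau> y)))"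
  proof (rule sum_mono)
    fix y
    show "N * (\<Sum>\<sigma>\<in>P. of_bool (f (perm_act \<sigma> y) \<noteq> g y))
      \<le> (\<Sum>\<sigma>\<in>P. \<Sum>\<tau>\<in>P. of_bool (f (perm_act \<sigma> y) \<noteq> f (perm_act \<tau> y)))"
      using majority_disagreement_le[OF finP, of "\<lambda>\<sigma>. f (perm_act \<sigma> y)"]
      by (simp add: N_def g_def sym_majority_def P_def)
  qed
  also have "\<dots> = N * S"
    using sum_SymInf_orbit_form[OF J, of f] by (simp add: N_def P_def S_def)
  finally have "N * (N * D) \<le> N * S" .
  then have "N * D \<le> S" using N by simp
  then have "D / real (card (cube n)) \<le> S / (real (card (cube n)) * N)"
    using N card_cube_pos[of n] by (simp add: field_simps)
  then show ?thesis
    using SymInf_eq_sum[OF finJ] by (simp add: disagree_eq_sum S_def D_def N_def P_def g_def)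
qed

theorem corollary1:
  fixes n t :: nat and \<epsilon> :: real and f :: "(nat \<Rightarrow> bool) \<Rightarrow> bool" and J :: "nat set"
  assumes "far_from_t_symmetric n \<epsilon> t f"
    and "J \<subseteq> {..<n}" and "card J \<ge> t"
  shows "SymInf n f J \<ge> \<epsilon>"
proof -
  have "t_symmetric n t (sym_majority J f)"
    using J_symmetric_sym_majority assms(2,3) by (auto simp: t_symmetric_def)
  then have "\<epsilon> \<le> disagree n f (sym_majority J f)"
    using assms(1) by (simp add: far_from_t_symmetric_def)
  also have "\<dots> \<le> SymInf n f J"
    using disagree_sym_majority_le_SymInf[OF assms(2)] .
  finally show ?thesis .
qed

end
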